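(* Let $f\in\mathbb Z[X]$ be a reciprocal Salem polynomial, and let $g\in\mathbb Z[X]$ have degree less than $\deg f$ and be such that $f+g$ is reciprocal. For $\epsilon\in\mathbb R$ set $f_\epsilon=f+\epsilon g\in\mathbb R[X]$. Let $k\in\mathbb N$ be such that $f_\epsilon$ has only simple roots for all $\epsilon\in[0,k]$. Then $f_k$ is a reciprocal Salem polynomial.
   Context: A polynomial $f=f_0+\dots+f_nX^n$ ($f_n\ne0$) is reciprocal if $f_i=f_{n-i}$ for all $i$. A Salem polynomial is a monic $f\in\mathbb Z[X]$ having exactly one root $\lambda$ with $|\lambda|>1$, this root being simple. *)

theory Defs
  imports "HOL-Computational_Algebra.Polynomial" Complex_Main
begin

definition reciprocal :: "'a::zero poly \<Rightarrow> bool" where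
  "reciprocal p \<longleftrightarrow> p \<noteq> 0 \<and> (\<forall>i\<le>degree p. coeff p i = coeff p (degree p - i))"

definition salem_poly :: "int poly \<Rightarrow> bool" where
  "salem_poly f \<longleftrightarrow> lead_coeff f = 1 \<and>
     (\<exists>!z::complex. poly (map_poly of_int f) z = 0 \<and> cmod z > 1) \<and>
     (\<forall>z::complex. poly (map_poly of_int f) z = 0 \<and> cmod z > 1
        \<longrightarrow> order z (map_poly of_int f) = 1)"

definition only_simple_roots :: "real poly \<Rightarrow> bool" where
  "only_simple_roots p \<longleftrightarrow> p \<noteq> 0 \<and>
     (\<forall>z::complex. poly (map_poly of_real p) z = 0 \<longrightarrow> order z (map_poly of_real p) = 1)"

end

theory Submission
  imports Defs "HOL-Computational_Algebra.Fundamental_Theorem_Algebra"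
begin

(* For \<epsilon> in [0, k] the polynomial f_\<epsilon> is monic of degree n = deg f, reciprocal with real
   coefficients (so z \<mapsto> 1/conj z permutes its roots) and has n distinct roots. For \<epsilon> near
   \<epsilon>0, matching each root of f_\<epsilon>0 with a nearby root of f_\<epsilon> is a bijection, by counting.
   Roots off the unit circle stay on their side of it; a root on the circle stays on it, since
   the reflection of its partner is a root just as close, hence the partner itself. So the
   number of roots outside the unit disc is locally constant, hence constant on [0, k], and it
   is 1 at \<epsilon> = 0. *)

lemma reciprocalD:
  assumes "reciprocal p" and "i \<le> degree p"
  shows "coeff p (degree p - i) = coeff p i"
  using assms unfolding reciprocal_def by metis

lemma reciprocalI:
  assumes "p \<noteq> 0" and "\<And>i. i \<le> degree p \<Longrightarrow> coeff p (degree p - i) = coeff p i"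
  shows "reciprocal p"
  using assms unfolding reciprocal_def by metis

lemma reflect_poly_eq_self_if_reciprocal:
  assumes "reciprocal p"
  shows "reflect_poly p = p"
proof (rule poly_eqI)
  fix i
  show "coeff (reflect_poly p) i = coeff p i"
  proof (cases "i \<le> degree p")
    case True
    then show ?thesis by (simp add: coeff_reflect_poly reciprocalD[OF assms True])
  qed (simp add: coeff_reflect_poly coeff_eq_0)
qed

lemma reciprocal_map_poly:
  assumes "reciprocal p" and "\<And>x. h x = 0 \<longleftrightarrow> x = 0"
  shows "reciprocal (map_poly h p)"
proof (rule reciprocalI)
  have "p \<noteq> 0" using assms(1) unfolding reciprocal_def by blast
  then show "map_poly h p \<noteq> 0" using assms(2) by (simp add: map_poly_eq_0_iff)
  fix i assume "i \<le> degree (map_poly h p)"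
  then show "coeff (map_poly h p) (degree (map_poly h p) - i) = coeff (map_poly h p) i"
    using assms(2) reciprocalD[OF assms(1), of i] by (simp add: degree_map_poly coeff_map_poly)
qed

lemma map_poly_add:
  assumes "h 0 = 0" and "\<And>a b. h (a + b) = h a + h b"
  shows "map_poly h (p + q) = map_poly h p + map_poly h q"
  by (rule poly_eqI) (simp add: assms coeff_map_poly)

lemma
  assumes "degree q < degree p"
  shows degree_add_smult_eq_left: "degree (p + smult c q) = degree p"
    and lead_coeff_add_smult_eq_left: "lead_coeff (p + smult c q) = lead_coeff p"
proof -
  show deg: "degree (p + smult c q) = degree p"
    using assms degree_smult_le[of c q] by (intro degree_add_eq_left) simp
  show "lead_coeff (p + smult c q) = lead_coeff p"
    using assms by (simp add: deg coeff_eq_0)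
qed

lemma reciprocal_add_smult:
  fixes p q :: "'a::comm_ring poly"
  assumes p: "reciprocal p" and pq: "reciprocal (p + q)" and deg: "degree q < degree p"
  shows "reciprocal (p + smult c q)"
proof -
  have deg_pq: "degree (p + q) = degree p" and deg_pcq: "degree (p + smult c q) = degree p"
    using deg by (auto intro: degree_add_eq_left degree_add_smult_eq_left)
  have q: "coeff q (degree p - i) = coeff q i" if "i \<le> degree p" for i
    using reciprocalD[OF pq, of i] reciprocalD[OF p that] that by (simp add: deg_pq)
  show ?thesis
  proof (rule reciprocalI)
    show "p + smult c q \<noteq> 0"
      using deg deg_pcq by (metis degree_0 not_less_zero)
    fix i assume "i \<le> degree (p + smult c q)"
    then show "coeff (p + smult c q) (degree (p + smult c q) - i) = coeff (p + smult c q) i"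
      using q[of i] reciprocalD[OF p, of i] by (simp add: deg_pcq)
  qed
qed

lemma poly_inverse_cnj_eq_0_if_reciprocal:
  fixes p :: "real poly"
  assumes "reciprocal p" and root: "poly (map_poly of_real p) z = 0"
  shows "poly (map_poly of_real p) (inverse (cnj z)) = 0"
proof (cases "z = 0")
  case False
  let ?p = "map_poly complex_of_real p"
  have "reflect_poly ?p = ?p"
    using assms by (intro reflect_poly_eq_self_if_reciprocal reciprocal_map_poly) auto
  moreover have "poly ?p (cnj z) = 0"
    using root by (subst real_poly_cnj_root_iff) (auto simp: coeff_map_poly)
  moreover have "poly (reflect_poly ?p) (cnj z) = cnj z ^ degree ?p * poly ?p (inverse (cnj z))"
    using False by (intro poly_reflect_poly_nz) simp
  ultimately have "cnj z ^ degree ?p * poly ?p (inverse (cnj z)) = 0"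
    by simp
  then show ?thesis using False by simp
qed (use root in simp)

lemma card_roots_eq_degree_if_rsquarefree:
  fixes p :: "complex poly"
  assumes "rsquarefree p"
  shows "card {z. poly p z = 0} = degree p"
proof -
  have "p \<noteq> 0" using assms by (simp add: rsquarefree_def)
  then have "degree p = degree (\<Prod>z | poly p z = 0. [:-z, 1:])"
    by (subst complex_poly_decompose_rsquarefree[OF assms, symmetric]) simp
  also have "\<dots> = (\<Sum>z | poly p z = 0. degree [:-z, 1:])"
    by (rule degree_prod_eq_sum_degree) auto
  finally show ?thesis by simp
qed

lemma norm_poly_ge_if_roots_far:
  fixes p :: "complex poly"
  assumes "lead_coeff p = 1" and "0 \<le> d" and far: "\<And>w. poly p w = 0 \<Longrightarrow> d \<le> cmod (z - w)"
  shows "d ^ degree p \<le> cmod (poly p z)"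
proof -
  obtain r where "smult (lead_coeff p) (\<Prod>i<degree p. [:-r i, 1:]) = p"
    by (rule complex_poly_decompose')
  then have p: "p = (\<Prod>i<degree p. [:-r i, 1:])" using assms(1) by simp
  have "poly p (r i) = 0" if "i < degree p" for i
    using that by (subst p) (auto simp: poly_prod)
  then have "(\<Prod>i<degree p. d) \<le> (\<Prod>i<degree p. cmod (z - r i))"
    using assms(2) far by (intro prod_mono) auto
  also have "\<dots> = cmod (poly p z)"
    by (subst (2) p) (simp add: poly_prod prod_norm)
  finally show ?thesis by simp
qed

lemma eventually_root_near:
  fixes P :: "'a::t2_space \<Rightarrow> complex poly"
  assumes monic: "\<forall>x\<in>S. lead_coeff (P x) = 1 \<and> degree (P x) = n"
    and cont: "continuous (at x0 within S) (\<lambda>x. poly (P x) z0)"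
    and root: "poly (P x0) z0 = 0" and "0 < \<delta>"
  shows "eventually (\<lambda>x. \<exists>w. poly (P x) w = 0 \<and> cmod (w - z0) < \<delta>) (at x0 within S)"
proof -
  have "((\<lambda>x. cmod (poly (P x) z0)) \<longlongrightarrow> 0) (at x0 within S)"
    using cont root by (auto simp: continuous_within intro: tendsto_norm_zero)
  then have "eventually (\<lambda>x. cmod (poly (P x) z0) < \<delta> ^ n) (at x0 within S)"
    using \<open>0 < \<delta>\<close> by (intro order_tendstoD) auto
  moreover have "eventually (\<lambda>x. x \<in> S) (at x0 within S)"
    by (simp add: eventually_at_filter)
  ultimately show ?thesis
  proof eventually_elim
    case (elim x)
    show ?case
    proof (rule ccontr)
      assume "\<not> ?case"
      then have "\<delta> ^ degree (P x) \<le> cmod (poly (P x) z0)"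
        using monic elim \<open>0 < \<delta>\<close>
        by (intro norm_poly_ge_if_roots_far) (auto simp: not_less norm_minus_commute)
      then show False using monic elim by auto
    qed
  qed
qed

lemma inverse_cnj_eq_self_iff:
  assumes "z \<noteq> 0"
  shows "inverse (cnj z) = z \<longleftrightarrow> cmod z = 1"
proof -
  have "inverse (cnj z) = z \<longleftrightarrow> z * cnj z = 1"
    using assms by (auto simp: field_simps)
  also have "\<dots> \<longleftrightarrow> (cmod z)\<^sup>2 = 1"
    by (metis complex_norm_square of_real_eq_1_iff)
  also have "\<dots> \<longleftrightarrow> cmod z = 1"
    using power2_eq_iff_nonneg[of "cmod z" 1] by simp
  finally show ?thesis .
qed

lemma norm_inverse_cnj_diff:
  assumes "cmod a = 1" and "b \<noteq> 0"
  shows "cmod (inverse (cnj b) - a) = cmod (b - a) / cmod b"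
proof -
  have "a \<noteq> 0" using assms by auto
  have "inverse (cnj a) = a"
    using assms \<open>a \<noteq> 0\<close> by (simp add: inverse_cnj_eq_self_iff)
  then have "inverse (cnj b) - a = inverse (cnj b) - inverse (cnj a)"
    by simp
  also have "\<dots> = cnj (a - b) / (cnj a * cnj b)"
    using assms(2) \<open>a \<noteq> 0\<close> by (simp add: field_simps)
  finally show ?thesis
    using assms by (simp add: norm_mult norm_divide norm_minus_commute flip: complex_cnj_diff)
qed

lemma card_roots_outside_unit_disc_eq_if_near:
  fixes p q :: "complex poly"
  assumes "rsquarefree p" "rsquarefree q" "degree q = degree p"
    and inv: "\<And>z. poly q z = 0 \<Longrightarrow> poly q (inverse (cnj z)) = 0"
    and "0 < \<delta>" "\<delta> < 1/2"
    and sep: "\<And>a b. poly p a = 0 \<Longrightarrow> poly p b = 0 \<Longrightarrow> a \<noteq> b \<Longrightarrow> 3 * \<delta> < cmod (a - b)"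
    and off: "\<And>a. poly p a = 0 \<Longrightarrow> cmod a \<noteq> 1 \<Longrightarrow> \<delta> < \<bar>cmod a - 1\<bar>"
    and near: "\<And>a. poly p a = 0 \<Longrightarrow> \<exists>w. poly q w = 0 \<and> cmod (w - a) < \<delta>"
  shows "card {z. poly q z = 0 \<and> 1 < cmod z} = card {z. poly p z = 0 \<and> 1 < cmod z}"
proof -
  define A where "A = {z. poly p z = 0}"
  define B where "B = {z. poly q z = 0}"
  have "\<forall>a\<in>A. \<exists>w. w \<in> B \<and> cmod (w - a) < \<delta>"
    using near by (simp add: A_def B_def)
  from bchoice[OF this] obtain \<phi> where \<phi>: "\<And>a. a \<in> A \<Longrightarrow> \<phi> a \<in> B \<and> cmod (\<phi> a - a) < \<delta>"
    by blast
  have close: "a' = a" if "a \<in> A" "a' \<in> A" "cmod (\<phi> a' - a) < 2 * \<delta>" for a a'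
  proof (rule ccontr)
    assume "a' \<noteq> a"
    have "cmod (a' - a) < \<delta> + 2 * \<delta>"
      using \<phi>[OF \<open>a' \<in> A\<close>] that(3)
      by (intro norm_diff_triangle_less[of _ "\<phi> a'"]) (simp_all add: norm_minus_commute)
    then show False using sep \<open>a' \<noteq> a\<close> that(1,2) by (fastforce simp: A_def)
  qed
  have inj: "inj_on \<phi> A"
  proof (rule inj_onI)
    fix a a' assume "a \<in> A" "a' \<in> A" "\<phi> a = \<phi> a'"
    then have "cmod (\<phi> a' - a) < 2 * \<delta>"
      using \<phi>[OF \<open>a \<in> A\<close>] \<open>0 < \<delta>\<close> by simp
    then show "a = a'" using close[OF \<open>a \<in> A\<close> \<open>a' \<in> A\<close>] by simp
  qed
  have "finite B" "p \<noteq> 0" "q \<noteq> 0"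
    using assms(1,2) by (auto simp: B_def rsquarefree_def poly_roots_finite)
  moreover have "card (\<phi> ` A) = card B"
    using assms(1-3) card_image[OF inj]
    by (simp add: A_def B_def card_roots_eq_degree_if_rsquarefree)
  ultimately have onto: "\<phi> ` A = B"
    using \<phi> by (intro card_subset_eq) auto
  have outside: "1 < cmod (\<phi> a) \<longleftrightarrow> 1 < cmod a" if "a \<in> A" for a
  proof -
    have near_a: "cmod (\<phi> a - a) < \<delta>" using \<phi> that by blast
    then have lower: "cmod a - \<delta> < cmod (\<phi> a)" and upper: "cmod (\<phi> a) < cmod a + \<delta>"
      using norm_triangle_ineq2[of a "\<phi> a"] norm_triangle_ineq2[of "\<phi> a" a]
      by (auto simp: norm_minus_commute)
    consider "cmod a \<noteq> 1" | "cmod a = 1" by blast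
    then show ?thesis
    proof cases
      case 1
      then show ?thesis using off[of a] that lower upper by (auto simp: A_def)
    next
      case 2
      \<comment> \<open>The reflected root 1/conj(\<phi> a) is again a root close to a, so it must be \<phi> a itself.\<close>
      have "cmod (\<phi> a) > 1/2" using lower 2 \<open>\<delta> < 1/2\<close> by simp
      have "inverse (cnj (\<phi> a)) \<in> \<phi> ` A"
        using inv \<phi> that onto by (auto simp: B_def)
      then obtain a' where "a' \<in> A" and a': "\<phi> a' = inverse (cnj (\<phi> a))" by auto
      have "cmod (\<phi> a' - a) = cmod (\<phi> a - a) / cmod (\<phi> a)"
        unfolding a' using 2 \<open>cmod (\<phi> a) > 1/2\<close> by (intro norm_inverse_cnj_diff) auto
      also have "\<dots> < \<delta> / (1/2)"
        using near_a \<open>cmod (\<phi> a) > 1/2\<close> \<open>0 < \<delta>\<close> by (intro frac_less) auto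
      finally have "a' = a" using close[of a a'] that \<open>a' \<in> A\<close> by simp
      then have "cmod (\<phi> a) = 1"
        using a' \<open>cmod (\<phi> a) > 1/2\<close> by (subst inverse_cnj_eq_self_iff[symmetric]) auto
      then show ?thesis using 2 by simp
    qed
  qed
  have "{z \<in> B. 1 < cmod z} = \<phi> ` {a \<in> A. 1 < cmod a}"
    using outside by (auto simp flip: onto)
  moreover have "inj_on \<phi> {a \<in> A. 1 < cmod a}"
    using inj by (rule inj_on_subset) auto
  ultimately show ?thesis by (simp add: card_image A_def B_def)
qed

lemma eventually_card_roots_outside_unit_disc_eq:
  fixes P :: "'a::t2_space \<Rightarrow> complex poly"
  assumes monic: "\<forall>x\<in>S. lead_coeff (P x) = 1 \<and> degree (P x) = n"
    and rsq: "\<forall>x\<in>S. rsquarefree (P x)"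
    and inv: "\<forall>x\<in>S. \<forall>z. poly (P x) z = 0 \<longrightarrow> poly (P x) (inverse (cnj z)) = 0"
    and cont: "\<And>z. continuous (at x0 within S) (\<lambda>x. poly (P x) z)"
    and "x0 \<in> S"
  shows "eventually (\<lambda>x. card {z. poly (P x) z = 0 \<and> 1 < cmod z}
                        = card {z. poly (P x0) z = 0 \<and> 1 < cmod z}) (at x0 within S)"
proof -
  define A where "A = {z. poly (P x0) z = 0}"
  have "finite A"
    using rsq \<open>x0 \<in> S\<close> by (auto simp: A_def rsquarefree_def poly_roots_finite)
  define C where "C = insert (1/2) ((\<lambda>(a, b). cmod (a - b) / 3) ` {(a, b) \<in> A \<times> A. a \<noteq> b}
                                   \<union> (\<lambda>a. \<bar>cmod a - 1\<bar>) ` {a \<in> A. cmod a \<noteq> 1})"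
  have "finite {(a, b) \<in> A \<times> A. a \<noteq> b}"
    by (rule finite_subset[of _ "A \<times> A"]) (use \<open>finite A\<close> in auto)
  then have "finite C" and C_pos: "\<forall>c\<in>C. 0 < c"
    using \<open>finite A\<close> by (auto simp: C_def)
  define \<delta> where "\<delta> = Min C / 2"
  have "Min C \<in> C"
    using \<open>finite C\<close> by (intro Min_in) (auto simp: C_def)
  then have "0 < \<delta>"
    using C_pos by (simp add: \<delta>_def)
  have \<delta>_less: "\<delta> < c" if "c \<in> C" for c
  proof -
    have "Min C \<le> c" and "0 < c"
      using that \<open>finite C\<close> C_pos by auto
    then show ?thesis by (simp add: \<delta>_def)
  qed
  have "\<delta> < 1/2" by (intro \<delta>_less) (simp add: C_def)
  have sep: "3 * \<delta> < cmod (a - b)" if "a \<in> A" "b \<in> A" "a \<noteq> b" for a b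
  proof -
    have "cmod (a - b) / 3 \<in> C" using that unfolding C_def by force
    then show ?thesis using \<delta>_less by fastforce
  qed
  have off: "\<delta> < \<bar>cmod a - 1\<bar>" if "a \<in> A" "cmod a \<noteq> 1" for a
    using that by (intro \<delta>_less) (simp add: C_def)
  have "eventually (\<lambda>x. \<forall>a\<in>A. \<exists>w. poly (P x) w = 0 \<and> cmod (w - a) < \<delta>) (at x0 within S)"
    using \<open>finite A\<close> monic cont \<open>0 < \<delta>\<close>
    by (intro eventually_ball_finite ballI eventually_root_near) (auto simp: A_def)
  moreover have "eventually (\<lambda>x. x \<in> S) (at x0 within S)"
    by (simp add: eventually_at_filter)
  ultimately show ?thesis
  proof eventually_elim
    case (elim x)
    show ?case
      using elim monic rsq inv \<open>x0 \<in> S\<close> \<open>0 < \<delta>\<close> \<open>\<delta> < 1/2\<close> sep off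
      by (intro card_roots_outside_unit_disc_eq_if_near) (auto simp: A_def)
  qed
qed

lemma card_roots_outside_unit_disc_const:
  fixes P :: "'a::t2_space \<Rightarrow> complex poly"
  assumes "connected S"
    and "\<forall>x\<in>S. lead_coeff (P x) = 1 \<and> degree (P x) = n"
    and "\<forall>x\<in>S. rsquarefree (P x)"
    and "\<forall>x\<in>S. \<forall>z. poly (P x) z = 0 \<longrightarrow> poly (P x) (inverse (cnj z)) = 0"
    and "\<And>x z. x \<in> S \<Longrightarrow> continuous (at x within S) (\<lambda>x. poly (P x) z)"
    and "x \<in> S" "y \<in> S"
  shows "card {z. poly (P x) z = 0 \<and> 1 < cmod z} = card {z. poly (P y) z = 0 \<and> 1 < cmod z}"
  using assms(1,6,7)
proof (rule connected_local_const)
  show "\<forall>x\<in>S. eventually (\<lambda>y. card {z. poly (P x) z = 0 \<and> 1 < cmod z}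
                              = card {z. poly (P y) z = 0 \<and> 1 < cmod z}) (at x within S)"
  proof
    fix x assume "x \<in> S"
    from eventually_card_roots_outside_unit_disc_eq[OF assms(2-4) assms(5)[OF this] this]
    show "eventually (\<lambda>y. card {z. poly (P x) z = 0 \<and> 1 < cmod z}
                           = card {z. poly (P y) z = 0 \<and> 1 < cmod z}) (at x within S)"
      by (rule eventually_mono) simp
  qed
qed

lemma rsquarefree_if_only_simple_roots:
  assumes "only_simple_roots p"
  shows "rsquarefree (map_poly complex_of_real p)"
proof -
  let ?p = "map_poly complex_of_real p"
  have "order z ?p = 0 \<or> order z ?p = 1" for z
    using assms order_0I[of ?p z] unfolding only_simple_roots_def by blast
  moreover have "?p \<noteq> 0"
    using assms by (simp add: only_simple_roots_def map_poly_eq_0_iff)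
  ultimately show ?thesis
    unfolding rsquarefree_def by blast
qed

lemma salem_poly_iff_card_roots_outside_unit_disc:
  fixes f :: "int poly"
  assumes "rsquarefree (map_poly of_int f :: complex poly)"
  shows "salem_poly f \<longleftrightarrow> lead_coeff f = 1 \<and>
           card {z::complex. poly (map_poly of_int f) z = 0 \<and> 1 < cmod z} = 1"
proof -
  have "(\<exists>!z. Q z) \<longleftrightarrow> card {z. Q z} = 1" for Q :: "complex \<Rightarrow> bool"
    by (auto simp: card_1_singleton_iff) (metis mem_Collect_eq singletonD singletonI)+
  moreover have "order z (map_poly of_int f) = 1" if "poly (map_poly of_int f) z = (0::complex)" for z
    using rsquarefree_root_order[OF assms that] assms by (simp add: rsquarefree_def)
  ultimately show ?thesis by (auto simp: salem_poly_def)
qed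

lemma card_roots_outside_unit_disc_add_smult_const:
  fixes p q :: "real poly" and S :: "real set"
  assumes "reciprocal p" "reciprocal (p + q)" "degree q < degree p" "lead_coeff p = 1"
    and "connected S" and "\<forall>e\<in>S. only_simple_roots (p + smult e q)"
    and "e1 \<in> S" "e2 \<in> S"
  shows "card {z. poly (map_poly complex_of_real (p + smult e1 q)) z = 0 \<and> 1 < cmod z}
       = card {z. poly (map_poly complex_of_real (p + smult e2 q)) z = 0 \<and> 1 < cmod z}"
proof (rule card_roots_outside_unit_disc_const[where n = "degree p"])
  show "\<forall>e\<in>S. lead_coeff (map_poly complex_of_real (p + smult e q)) = 1 \<and>
                degree (map_poly complex_of_real (p + smult e q)) = degree p"
    using assms(3,4) by (simp add: degree_map_poly coeff_map_poly degree_add_smult_eq_left coeff_eq_0)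
  show "\<forall>e\<in>S. \<forall>z. poly (map_poly complex_of_real (p + smult e q)) z = 0 \<longrightarrow>
                  poly (map_poly complex_of_real (p + smult e q)) (inverse (cnj z)) = 0"
    using assms(1-3) by (simp add: reciprocal_add_smult poly_inverse_cnj_eq_0_if_reciprocal)
  have "poly (map_poly complex_of_real (p + smult e q)) z
        = poly (map_poly of_real p) z + of_real e * poly (map_poly of_real q) z" for e z
    by (simp add: map_poly_add map_poly_smult)
  then show "continuous (at e within S) (\<lambda>e. poly (map_poly complex_of_real (p + smult e q)) z)"
    for e z
    by (simp add: continuous_intros)
qed (use assms(5-8) in \<open>auto simp: rsquarefree_if_only_simple_roots\<close>)

theorem lemma3:
  fixes f g :: "int poly" and k :: nat
  assumes "reciprocal f" and "salem_poly f"
    and "degree g < degree f"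
    and "reciprocal (f + g)"
    and "\<forall>\<epsilon>::real. 0 \<le> \<epsilon> \<and> \<epsilon> \<le> real k \<longrightarrow>
           only_simple_roots (map_poly of_int f + smult \<epsilon> (map_poly of_int g))"
  shows "reciprocal (f + smult (int k) g) \<and> salem_poly (f + smult (int k) g)"
proof -
  have lc: "lead_coeff f = 1" using assms(2) by (simp add: salem_poly_def)
  have of_int_eq: "map_poly complex_of_real (map_poly of_int f + smult (real m) (map_poly of_int g))
                   = map_poly of_int (f + smult (int m) g)" for m
    by (rule poly_eqI) (simp add: coeff_map_poly)
  have "card {z. poly (map_poly of_int (f + smult (int k) g)) z = 0 \<and> 1 < cmod z}
      = card {z. poly (map_poly of_int (f + smult (int 0) g)) z = (0::complex) \<and> 1 < cmod z}"
    unfolding of_int_eq[symmetric]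
  proof (rule card_roots_outside_unit_disc_add_smult_const[where S = "{0..real k}"])
    show "reciprocal (map_poly real_of_int f)" "reciprocal (map_poly real_of_int f + map_poly of_int g)"
      using assms(1,4) by (auto simp flip: map_poly_add intro: reciprocal_map_poly)
    show "degree (map_poly real_of_int g) < degree (map_poly real_of_int f)"
      using assms(3) by (simp add: degree_map_poly)
    show "lead_coeff (map_poly real_of_int f) = 1"
      using lc by (simp add: degree_map_poly coeff_map_poly)
  qed (use assms(5) in auto)
  moreover have rsq: "rsquarefree (map_poly of_int (f + smult (int m) g) :: complex poly)"
    if "m \<le> k" for m
    using assms(5) that by (auto simp flip: of_int_eq intro: rsquarefree_if_only_simple_roots)
  moreover have "lead_coeff (f + smult (int k) g) = 1"
    using lc lead_coeff_add_smult_eq_left[OF assms(3)] by (simp only:)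
  ultimately show ?thesis
    using assms(1-4) lc rsq[of 0]
    by (simp add: reciprocal_add_smult salem_poly_iff_card_roots_outside_unit_disc)
qed

end
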